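(* Let $1 \le k_1, k_2$ be integers. (a) If $m$ is an integer with $k_1 + k_2 - m \le \dim V$, then the Euclidean space $\mathfrak M$ (that is, the family $\mathcal L$ of lines together with the line orthogonality $\perp$ on $\mathcal L$) is definable in the structure $\langle S, \mathcal H_{k_1}, \mathcal H_{k_2}, \perp^{m}_{k_1,k_2}\rangle$. (b) If moreover $k_1,k_2<\dim V$, then the Euclidean space $\mathfrak M$ is definable in the structure $\mathfrak K := \langle S, \mathcal H_{k_1}, \mathcal H_{k_2}, \perp^{\circ}\cap(\mathcal H_{k_1}\times\mathcal H_{k_2})\rangle$.
   Context: Let $V$ be a vector space over a field with a nondegenerate symmetric bilinear form $\xi$ having no isotropic vectors ($\xi(v,v)\neq 0$ for $v\neq 0$). The Euclidean space $\mathfrak M$ has point set $S=V$; its (affine) subspaces are the sets $p+W$ ($p\in V$, $W$ a linear subspace, called the direction), of dimension $\dim W$ (points have dimension $0$). $\mathcal H_k$ is the family of $k$-dimensional subspaces and $\mathcal L=\mathcal H_1$ the family of lines; $\dim\mathfrak M=\dim V$. For lines, $L_1\perp L_2$ iff their directions are $\xi$-orthogonal. For subspaces $X_1,X_2$, $X_1\sqcup X_2$ is the least subspace containing $X_1\cup X_2$. For nonempty subspaces $X,Y$: $X\perp Y$ iff $\xi(b-a,d-c)=0$ for all $a,b\in X$, $c,d\in Y$; and $X\perp_x Y$ iff $X\perp Y$ and $X\cap Y\neq\emptyset$. Define $X_1\perp^{\circ}X_2$ iff there are a point $q\in X_1\cap X_2$ and subspaces $Z_1,Z_2$ with $q\in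 Z_1,Z_2$, $Z_i\perp_x X_1\cap X_2$, $Z_1\perp_x Z_2$, and $(X_1\cap X_2)\sqcup Z_i=X_i$ for $i=1,2$. Define $X_1\perp^{*}X_2$ iff $X_1\perp^{\circ}X_2$ and $X_1\cap X_2\neq X_1$, $X_1\cap X_2\neq X_2$. Write $X_1\perp^{m}_{k_1,k_2}X_2$ iff $X_1\perp^{*}X_2$, $X_1\in\mathcal H_{k_1}$, $X_2\in\mathcal H_{k_2}$ and $X_1\cap X_2\in\mathcal H_m$. "Definable" means first-order definable. *)

theory Defs
  imports Complex_Main
begin

definition anisotropic_space ::
  "('f::field \<Rightarrow> 'v::ab_group_add \<Rightarrow> 'v) \<Rightarrow> ('v \<Rightarrow> 'v \<Rightarrow> 'f) \<Rightarrow> bool" where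
  "anisotropic_space scale xi \<longleftrightarrow>
     vector_space scale \<and>
     (\<forall>u v. xi u v = xi v u) \<and>
     (\<forall>u v w. xi (u + v) w = xi u w + xi v w) \<and>
     (\<forall>a u w. xi (scale a u) w = a * xi u w) \<and>
     (\<forall>v. (\<forall>w. xi v w = 0) \<longrightarrow> v = 0) \<and>
     (\<forall>v. v \<noteq> 0 \<longrightarrow> xi v v \<noteq> 0)"

definition lin_dim_eq :: "('f::field \<Rightarrow> 'v::ab_group_add \<Rightarrow> 'v) \<Rightarrow> 'v set \<Rightarrow> nat \<Rightarrow> bool" where
  "lin_dim_eq scale W k \<longleftrightarrow>
     (\<exists>B. finite B \<and> card B = k \<and> \<not> module.dependent scale B \<and> module.span scale B = W)"

text \<open>dim V \<ge> n (allowing V infinite-dimensional): V contains n linearly independent vectors.\<close>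
definition dim_ge :: "('f::field \<Rightarrow> 'v::ab_group_add \<Rightarrow> 'v) \<Rightarrow> nat \<Rightarrow> bool" where
  "dim_ge scale n \<longleftrightarrow> (\<exists>B. finite B \<and> card B = n \<and> \<not> module.dependent scale B)"

definition affsub :: "('f::field \<Rightarrow> 'v::ab_group_add \<Rightarrow> 'v) \<Rightarrow> 'v set \<Rightarrow> bool" where
  "affsub scale X \<longleftrightarrow> (\<exists>p W. module.subspace scale W \<and> X = (\<lambda>w. p + w) ` W)"

definition Hk :: "('f::field \<Rightarrow> 'v::ab_group_add \<Rightarrow> 'v) \<Rightarrow> nat \<Rightarrow> 'v set set" where
  "Hk scale k = {X. \<exists>p W. module.subspace scale W \<and> lin_dim_eq scale W k \<and> X = (\<lambda>w. p + w) ` W}"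

definition join :: "('f::field \<Rightarrow> 'v::ab_group_add \<Rightarrow> 'v) \<Rightarrow> 'v set \<Rightarrow> 'v set \<Rightarrow> 'v set" where
  "join scale X1 X2 = \<Inter>{Z. affsub scale Z \<and> X1 \<union> X2 \<subseteq> Z}"

definition perp :: "('v::ab_group_add \<Rightarrow> 'v \<Rightarrow> 'f::field) \<Rightarrow> 'v set \<Rightarrow> 'v set \<Rightarrow> bool" where
  "perp xi X Y \<longleftrightarrow> X \<noteq> {} \<and> Y \<noteq> {} \<and>
     (\<forall>a\<in>X. \<forall>b\<in>X. \<forall>c\<in>Y. \<forall>d\<in>Y. xi (b - a) (d - c) = 0)"

definition perp_x :: "('v::ab_group_add \<Rightarrow> 'v \<Rightarrow> 'f::field) \<Rightarrow> 'v set \<Rightarrow> 'v set \<Rightarrow> bool" where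
  "perp_x xi X Y \<longleftrightarrow> perp xi X Y \<and> X \<inter> Y \<noteq> {}"

definition line_perp :: "('v::ab_group_add \<Rightarrow> 'v \<Rightarrow> 'f::field) \<Rightarrow> 'v set \<Rightarrow> 'v set \<Rightarrow> bool" where
  "line_perp xi L1 L2 \<longleftrightarrow>
     (\<forall>u\<in>{b - a |a b. a \<in> L1 \<and> b \<in> L1}. \<forall>w\<in>{b - a |a b. a \<in> L2 \<and> b \<in> L2}. xi u w = 0)"

definition perp_circ ::
  "('f::field \<Rightarrow> 'v::ab_group_add \<Rightarrow> 'v) \<Rightarrow> ('v \<Rightarrow> 'v \<Rightarrow> 'f) \<Rightarrow> 'v set \<Rightarrow> 'v set \<Rightarrow> bool" where
  "perp_circ scale xi X1 X2 \<longleftrightarrow>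
     (\<exists>q Z1 Z2. q \<in> X1 \<inter> X2 \<and> affsub scale Z1 \<and> affsub scale Z2 \<and> q \<in> Z1 \<and> q \<in> Z2 \<and>
        perp_x xi Z1 (X1 \<inter> X2) \<and> perp_x xi Z2 (X1 \<inter> X2) \<and> perp_x xi Z1 Z2 \<and>
        join scale (X1 \<inter> X2) Z1 = X1 \<and> join scale (X1 \<inter> X2) Z2 = X2)"

definition perp_star ::
  "('f::field \<Rightarrow> 'v::ab_group_add \<Rightarrow> 'v) \<Rightarrow> ('v \<Rightarrow> 'v \<Rightarrow> 'f) \<Rightarrow> 'v set \<Rightarrow> 'v set \<Rightarrow> bool" where
  "perp_star scale xi X1 X2 \<longleftrightarrow> perp_circ scale xi X1 X2 \<and> X1 \<inter> X2 \<noteq> X1 \<and> X1 \<inter> X2 \<noteq> X2"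

definition perp_m ::
  "('f::field \<Rightarrow> 'v::ab_group_add \<Rightarrow> 'v) \<Rightarrow> ('v \<Rightarrow> 'v \<Rightarrow> 'f) \<Rightarrow> nat \<Rightarrow> nat \<Rightarrow> nat \<Rightarrow> 'v set \<Rightarrow> 'v set \<Rightarrow> bool" where
  "perp_m scale xi m k1 k2 X1 X2 \<longleftrightarrow>
     perp_star scale xi X1 X2 \<and> X1 \<in> Hk scale k1 \<and> X2 \<in> Hk scale k2 \<and> X1 \<inter> X2 \<in> Hk scale m"

text \<open>Three-sorted first-order formulas: variables of sort 0 range over points,
of sort 1 over members of the first family, of sort 2 over members of the second;
atomic formulas are equalities within a sort, incidence (point in block) and R(X,Y).\<close>
datatype fo =
    EqP nat nat | Eq1 nat nat | Eq2 nat nat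
  | In1 nat nat | In2 nat nat | Rel nat nat
  | Neg fo | Conj fo fo
  | ExP nat fo | Ex1 nat fo | Ex2 nat fo

fun sat :: "'p set \<Rightarrow> 'p set set \<Rightarrow> 'p set set \<Rightarrow> ('p set \<Rightarrow> 'p set \<Rightarrow> bool)
            \<Rightarrow> (nat \<Rightarrow> 'p) \<Rightarrow> (nat \<Rightarrow> 'p set) \<Rightarrow> (nat \<Rightarrow> 'p set) \<Rightarrow> fo \<Rightarrow> bool" where
  "sat S H1 H2 R e0 e1 e2 (EqP i j) = (e0 i = e0 j)"
| "sat S H1 H2 R e0 e1 e2 (Eq1 i j) = (e1 i = e1 j)"
| "sat S H1 H2 R e0 e1 e2 (Eq2 i j) = (e2 i = e2 j)"
| "sat S H1 H2 R e0 e1 e2 (In1 i j) = (e0 i \<in> e1 j)"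
| "sat S H1 H2 R e0 e1 e2 (In2 i j) = (e0 i \<in> e2 j)"
| "sat S H1 H2 R e0 e1 e2 (Rel i j) = R (e1 i) (e2 j)"
| "sat S H1 H2 R e0 e1 e2 (Neg \<phi>) = (\<not> sat S H1 H2 R e0 e1 e2 \<phi>)"
| "sat S H1 H2 R e0 e1 e2 (Conj \<phi> \<psi>) = (sat S H1 H2 R e0 e1 e2 \<phi> \<and> sat S H1 H2 R e0 e1 e2 \<psi>)"
| "sat S H1 H2 R e0 e1 e2 (ExP x \<phi>) = (\<exists>a\<in>S. sat S H1 H2 R (e0(x := a)) e1 e2 \<phi>)"
| "sat S H1 H2 R e0 e1 e2 (Ex1 x \<phi>) = (\<exists>X\<in>H1. sat S H1 H2 R e0 (e1(x := X)) e2 \<phi>)"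
| "sat S H1 H2 R e0 e1 e2 (Ex2 x \<phi>) = (\<exists>Y\<in>H2. sat S H1 H2 R e0 e1 (e2(x := Y)) \<phi>)"

text \<open>The structure \<langle>S, Lines, \<perp>\<rangle> is (parameter-free) first-order definable in
\<langle>S, H1, H2, R\<rangle>: the line relation "a \<noteq> b and c lies on the line through a, b"
and the relation "a \<noteq> b, c \<noteq> d and line ab \<perp> line cd" are definable by formulas
whose free variables are point variables 0,1,2 (resp. 0,1,2,3).\<close>
definition fo_definable_in ::
  "'p set \<Rightarrow> 'p set set \<Rightarrow> ('p set \<Rightarrow> 'p set \<Rightarrow> bool)
   \<Rightarrow> 'p set set \<Rightarrow> 'p set set \<Rightarrow> ('p set \<Rightarrow> 'p set \<Rightarrow> bool) \<Rightarrow> bool" where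
  "fo_definable_in S Lines LPerp H1 H2 R \<longleftrightarrow>
     (\<exists>\<phi> \<psi>.
        (\<forall>e0 e1 e2. (\<forall>i. e0 i \<in> S) \<longrightarrow>
           (sat S H1 H2 R e0 e1 e2 \<phi> \<longleftrightarrow>
              e0 0 \<noteq> e0 1 \<and> (\<exists>L\<in>Lines. e0 0 \<in> L \<and> e0 1 \<in> L \<and> e0 2 \<in> L))) \<and>
        (\<forall>e0 e1 e2. (\<forall>i. e0 i \<in> S) \<longrightarrow>
           (sat S H1 H2 R e0 e1 e2 \<psi> \<longleftrightarrow>
              e0 0 \<noteq> e0 1 \<and> e0 2 \<noteq> e0 3 \<and>
              (\<exists>L1\<in>Lines. \<exists>L2\<in>Lines. e0 0 \<in> L1 \<and> e0 1 \<in> L1 \<and> e0 2 \<in> L2 \<and> e0 3 \<in> L2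
                 \<and> LPerp L1 L2))))"

end

theory Submission
  imports Defs
begin

text \<open>
  Collinearity is recovered from the \<open>k\<^sub>1\<close>-flats alone: \<open>c\<close> lies on the line \<open>ab\<close>
  iff it lies on every \<open>k\<^sub>1\<close>-flat through \<open>a\<close> and \<open>b\<close>, because in dimension
  \<open>> k\<^sub>1\<close> a flat through a line can be chosen to miss any given point off it.

  Orthogonality is recovered through normals: for \<open>x\<close> in a \<open>k\<^sub>1\<close>-flat \<open>X\<^sub>1\<close>, the
  vector \<open>y - x\<close> is orthogonal to \<open>X\<^sub>1\<close> iff for every \<open>z \<in> X\<^sub>1 - {x}\<close> some
  \<open>X\<^sub>2\<close> related to \<open>X\<^sub>1\<close> passes through \<open>x\<close> and \<open>y\<close> but not through \<open>z\<close>. Such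
  \<open>X\<^sub>2\<close> are built from orthogonal bases, which exist since \<open>xi\<close> is anisotropic;
  conversely \<open>X\<^sub>1 \<perp>\<^sup>\<circ> X\<^sub>2\<close> splits every vector of \<open>X\<^sub>2\<close> into a part in
  \<open>X\<^sub>1 \<inter> X\<^sub>2\<close> and a part orthogonal to \<open>X\<^sub>1\<close>, which forces \<open>z \<in> X\<^sub>2\<close> as soon as
  \<open>y - x\<close> has a nonzero projection \<open>z - x\<close> on \<open>X\<^sub>1\<close>. Finally the lines \<open>ab\<close> and
  \<open>cd\<close> are orthogonal iff some \<open>k\<^sub>1\<close>-flat through \<open>a, b\<close> has a point \<open>x\<close> with
  \<open>c - x\<close> and \<open>d - x\<close> both normal to it.
\<close>

section \<open>Orthogonal sets of an anisotropic form\<close>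

locale anisotropic_form =
  fixes scale :: "'f::field \<Rightarrow> 'v::ab_group_add \<Rightarrow> 'v" and xi :: "'v \<Rightarrow> 'v \<Rightarrow> 'f"
  assumes anisotropic: "anisotropic_space scale xi"
begin

sublocale vector_space scale
  using anisotropic unfolding anisotropic_space_def by blast

lemma xi_sym: "xi u v = xi v u"
  using anisotropic unfolding anisotropic_space_def by blast

lemma xi_add_left: "xi (u + v) w = xi u w + xi v w"
  using anisotropic unfolding anisotropic_space_def by blast

lemma xi_scale_left: "xi (scale a u) w = a * xi u w"
  using anisotropic unfolding anisotropic_space_def by blast

lemma xi_self_eq_0_iff: "xi v v = 0 \<longleftrightarrow> v = 0"
proof
  assume "xi v v = 0"
  then show "v = 0"
    using anisotropic unfolding anisotropic_space_def by blast
next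
  assume "v = 0"
  then show "xi v v = 0"
    using xi_scale_left[of 0 0 0] by simp
qed

lemma xi_zero_left [simp]: "xi 0 w = 0"
  using xi_scale_left[of 0 0 w] by simp

lemma xi_minus_left: "xi (- u) w = - xi u w"
  using xi_add_left[of u "- u" w] by (simp add: eq_neg_iff_add_eq_0 add.commute)

lemma xi_diff_left: "xi (u - v) w = xi u w - xi v w"
  using xi_add_left[of u "- v" w] by (simp add: xi_minus_left)

lemma xi_sum_left: "xi (sum f A) w = (\<Sum>a\<in>A. xi (f a) w)"
  by (induction A rule: infinite_finite_induct) (auto simp: xi_add_left)

lemma xi_span_left_eq_0:
  assumes "\<forall>a\<in>A. xi a w = 0" "v \<in> span A"
  shows "xi v w = 0"
  using assms(2)
  by (induction rule: span_induct_alt) (auto simp: xi_add_left xi_scale_left assms(1))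

lemma xi_span_eq_0:
  assumes "\<forall>a\<in>A. \<forall>b\<in>B. xi a b = 0" "u \<in> span A" "w \<in> span B"
  shows "xi u w = 0"
proof -
  have "xi u b = 0" if "b \<in> B" for b
    using xi_span_left_eq_0[OF _ assms(2)] assms(1) that by blast
  then have "xi w u = 0"
    using xi_span_left_eq_0[OF _ assms(3), of u] by (simp add: xi_sym)
  then show ?thesis
    by (simp add: xi_sym)
qed

definition orthogonal_set :: "'v set \<Rightarrow> bool" where
  "orthogonal_set T \<longleftrightarrow> 0 \<notin> T \<and> (\<forall>s\<in>T. \<forall>t\<in>T. s \<noteq> t \<longrightarrow> xi s t = 0)"

lemma orthogonal_set_subset: "orthogonal_set T \<Longrightarrow> S \<subseteq> T \<Longrightarrow> orthogonal_set S"
  unfolding orthogonal_set_def by blast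

lemma orthogonal_set_singleton: "v \<noteq> 0 \<Longrightarrow> orthogonal_set {v}"
  unfolding orthogonal_set_def by simp

lemma orthogonal_set_insert:
  assumes "orthogonal_set T" "v \<noteq> 0" "\<forall>t\<in>T. xi v t = 0"
  shows "orthogonal_set (insert v T)" "v \<notin> T"
proof -
  show "v \<notin> T"
    using assms xi_self_eq_0_iff by auto
  have "xi t v = 0" if "t \<in> T" for t
    using assms(3) that by (simp add: xi_sym[of t v])
  then show "orthogonal_set (insert v T)"
    using assms unfolding orthogonal_set_def by auto
qed

lemma orthogonal_set_disjoint_spans:
  assumes "orthogonal_set T" "P \<subseteq> T" "Q \<subseteq> T" "P \<inter> Q = {}" "u \<in> span P" "w \<in> span Q"
  shows "xi u w = 0"
proof -
  have "\<forall>a\<in>P. \<forall>b\<in>Q. xi a b = 0"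
  proof (intro ballI)
    fix a b assume "a \<in> P" "b \<in> Q"
    then have "a \<noteq> b" "a \<in> T" "b \<in> T"
      using assms(2-4) by auto
    then show "xi a b = 0"
      using assms(1) unfolding orthogonal_set_def by blast
  qed
  then show ?thesis
    using xi_span_eq_0 assms(5,6) by blast
qed

lemma orthogonal_set_span_orthogonal_outside:
  assumes "orthogonal_set T" "P \<subseteq> T" "t \<in> T" "t \<notin> P" "v \<in> span P"
  shows "xi v t = 0"
proof -
  have "{t} \<subseteq> T" "P \<inter> {t} = {}" "t \<in> span {t}"
    using assms(3,4) by (auto simp: span_base)
  then show ?thesis
    using orthogonal_set_disjoint_spans[OF assms(1,2)] assms(5) by blast
qed

lemma orthogonal_set_not_in_span:
  assumes "orthogonal_set T" "P \<subseteq> T" "t \<in> T" "t \<notin> P"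
  shows "t \<notin> span P"
proof
  assume "t \<in> span P"
  then have "xi t t = 0"
    using orthogonal_set_span_orthogonal_outside[OF assms] by blast
  then show False
    using assms(1,3) xi_self_eq_0_iff unfolding orthogonal_set_def by auto
qed

lemma orthogonal_set_independent: "orthogonal_set T \<Longrightarrow> independent T"
  unfolding dependent_def using orthogonal_set_not_in_span by blast

definition orth_proj :: "'v set \<Rightarrow> 'v \<Rightarrow> 'v" where
  "orth_proj T v = (\<Sum>t\<in>T. scale (xi v t / xi t t) t)"

lemma orth_proj_in_span: "orth_proj T v \<in> span T"
  unfolding orth_proj_def by (intro span_sum span_scale span_base)

lemma orth_proj_residual_orthogonal:
  assumes "finite T" "orthogonal_set T" "t \<in> T"
  shows "xi (v - orth_proj T v) t = 0"
proof -
  have "xi (orth_proj T v) t = (\<Sum>s\<in>T. (xi v s / xi s s) * xi s t)"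
    unfolding orth_proj_def by (simp add: xi_sum_left xi_scale_left)
  also have "\<dots> = (xi v t / xi t t) * xi t t + (\<Sum>s\<in>T-{t}. (xi v s / xi s s) * xi s t)"
    using assms by (simp add: sum.remove)
  also have "(\<Sum>s\<in>T-{t}. (xi v s / xi s s) * xi s t) = 0"
    using assms unfolding orthogonal_set_def by (intro sum.neutral) auto
  moreover have "xi t t \<noteq> 0"
    using assms xi_self_eq_0_iff unfolding orthogonal_set_def by auto
  ultimately show ?thesis
    by (simp add: xi_diff_left)
qed

lemma orth_proj_residual_orthogonal_span:
  assumes "finite T" "orthogonal_set T" "d \<in> span T"
  shows "xi (v - orth_proj T v) d = 0"
  using xi_span_eq_0[of "{v - orth_proj T v}" T] orth_proj_residual_orthogonal[OF assms(1,2)]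
    assms(3) span_base[of "v - orth_proj T v"] by blast

lemma orth_proj_eq_self:
  assumes "finite T" "orthogonal_set T" "v \<in> span T"
  shows "orth_proj T v = v"
proof -
  have "v - orth_proj T v \<in> span T"
    using assms(3) orth_proj_in_span span_diff by blast
  then have "xi (v - orth_proj T v) (v - orth_proj T v) = 0"
    using orth_proj_residual_orthogonal_span[OF assms(1,2)] by blast
  then show ?thesis
    using xi_self_eq_0_iff by simp
qed

lemma in_span_subset_if_orthogonal_to_rest:
  assumes "finite T" "orthogonal_set T" "P \<subseteq> T" "v \<in> span T" "\<forall>t\<in>T-P. xi v t = 0"
  shows "v \<in> span P"
proof -
  have "v = orth_proj T v"
    using orth_proj_eq_self assms by simp
  also have "\<dots> = (\<Sum>t\<in>P. scale (xi v t / xi t t) t)"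
    unfolding orth_proj_def using assms by (intro sum.mono_neutral_right) auto
  also have "\<dots> \<in> span P"
    by (intro span_sum span_scale span_base)
  finally show ?thesis .
qed

lemma span_Int_orthogonal_set:
  assumes "finite T" "orthogonal_set T" "P \<subseteq> T" "Q \<subseteq> T"
  shows "span P \<inter> span Q = span (P \<inter> Q)"
proof
  show "span (P \<inter> Q) \<subseteq> span P \<inter> span Q"
    by (simp add: span_mono)
  show "span P \<inter> span Q \<subseteq> span (P \<inter> Q)"
  proof
    fix v assume v: "v \<in> span P \<inter> span Q"
    have orth: "\<forall>t\<in>T - P \<inter> Q. xi v t = 0"
      using v orthogonal_set_span_orthogonal_outside[OF assms(2,3)]
        orthogonal_set_span_orthogonal_outside[OF assms(2,4)] by blast
    have "v \<in> span T" "P \<inter> Q \<subseteq> T"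
      using v span_mono[OF assms(3)] assms(3) by blast+
    then show "v \<in> span (P \<inter> Q)"
      using in_span_subset_if_orthogonal_to_rest[OF assms(1,2) _ _ orth] by blast
  qed
qed

lemma orthogonal_set_extend:
  assumes S: "subspace S" and T: "T \<subseteq> S" "finite T" "orthogonal_set T"
    and B: "B \<subseteq> S" "independent B" "finite B" and n: "card T \<le> n" "n \<le> card B"
  shows "\<exists>T'. T \<subseteq> T' \<and> T' \<subseteq> S \<and> finite T' \<and> orthogonal_set T' \<and> card T' = n"
  using T n
proof (induction "n - card T" arbitrary: T)
  case 0
  then show ?case by auto
next
  case (Suc k)
  have "\<not> B \<subseteq> span T"
    using independent_span_bound[OF Suc.prems(2) B(2)] Suc.hyps(2) Suc.prems(5) by auto
  then obtain b where b: "b \<in> B" "b \<notin> span T"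
    by blast
  define v where "v = b - orth_proj T b"
  have "span T \<subseteq> S"
    using span_minimal[OF Suc.prems(1) S] .
  then have vS: "v \<in> S"
    unfolding v_def using b B(1) orth_proj_in_span subspace_diff[OF S] by blast
  have "v \<noteq> 0"
    unfolding v_def using b orth_proj_in_span[of T b] by force
  moreover have "\<forall>t\<in>T. xi v t = 0"
    unfolding v_def using orth_proj_residual_orthogonal Suc.prems(2,3) by blast
  ultimately have v: "orthogonal_set (insert v T)" "v \<notin> T"
    using orthogonal_set_insert[OF Suc.prems(3)] by auto
  then have k: "k = n - card (insert v T)" and le: "card (insert v T) \<le> n"
    using Suc.hyps(2) Suc.prems(2) by auto
  have sub: "insert v T \<subseteq> S" and fin: "finite (insert v T)"
    using Suc.prems(1,2) vS by auto
  show ?case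
    using Suc.hyps(1)[OF k sub fin v(1) le Suc.prems(5)] by blast
qed

lemma dim_ge_mono: "dim_ge scale n \<Longrightarrow> k \<le> n \<Longrightarrow> dim_ge scale k"
  unfolding dim_ge_def
proof (elim exE conjE)
  fix B assume B: "finite B" "card B = n" "\<not> dependent B" and "k \<le> n"
  then obtain A where "A \<subseteq> B" "card A = k" "finite A"
    by (metis obtain_subset_with_card_n)
  then show "\<exists>A. finite A \<and> card A = k \<and> \<not> dependent A"
    using B(3) independent_mono by blast
qed

lemma orthogonal_set_extend_UNIV:
  assumes "dim_ge scale n" "finite T" "orthogonal_set T" "card T \<le> n"
  shows "\<exists>T'. T \<subseteq> T' \<and> finite T' \<and> orthogonal_set T' \<and> card T' = n"
proof -
  obtain B where B: "finite B" "card B = n" "independent B"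
    using assms(1) unfolding dim_ge_def by blast
  show ?thesis
    using orthogonal_set_extend[OF subspace_UNIV subset_UNIV assms(2,3) subset_UNIV B(3,1) assms(4)] B(2)
    by blast
qed

lemma orthogonal_set_containing_perp_to:
  assumes dg: "dim_ge scale (k + 1)" and k: "1 \<le> k"
    and uv: "u \<noteq> 0" "v \<noteq> 0" "xi u v = 0"
  obtains T where "finite T" "orthogonal_set T" "card T = k" "u \<in> T" "\<forall>t\<in>T. xi v t = 0"
proof -
  have ne: "u \<noteq> v"
    using uv xi_self_eq_0_iff by auto
  have fin: "finite {u, v}"
    by simp
  have orth: "orthogonal_set {u, v}"
    using uv ne unfolding orthogonal_set_def by (auto simp: xi_sym[of v u])
  have card: "card {u, v} \<le> k + 1"
    using ne k by simp
  obtain T where T: "{u, v} \<subseteq> T" "finite T" "orthogonal_set T" "card T = k + 1"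
    using orthogonal_set_extend_UNIV[OF dg fin orth card] by blast
  show ?thesis
  proof (rule that[of "T - {v}"])
    show "finite (T - {v})"
      using T(2) by simp
    show "orthogonal_set (T - {v})"
      using orthogonal_set_subset[OF T(3)] by blast
    show "card (T - {v}) = k"
      using T(1,2,4) by simp
    have "u \<in> T" "v \<in> T"
      using T(1) by auto
    then show "u \<in> T - {v}"
      using ne by blast
    show "\<forall>t\<in>T - {v}. xi v t = 0"
    proof
      fix t assume "t \<in> T - {v}"
      then show "xi v t = 0"
        using T(3) \<open>v \<in> T\<close> unfolding orthogonal_set_def by force
    qed
  qed
qed

lemma orthogonal_set_containing_avoiding:
  assumes dg: "dim_ge scale (k + 1)" and k: "1 \<le> k" and u: "u \<noteq> 0" and w: "w \<notin> span {u}"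
  obtains T where "finite T" "orthogonal_set T" "card T = k" "u \<in> T" "w \<notin> span T"
proof -
  define v where "v = w - orth_proj {u} w"
  have v: "v \<noteq> 0"
    unfolding v_def using w orth_proj_in_span[of "{u}" w] by auto
  have "xi u v = 0"
    unfolding v_def using orth_proj_residual_orthogonal[OF _ orthogonal_set_singleton[OF u]]
    by (simp add: xi_sym)
  then obtain T where T: "finite T" "orthogonal_set T" "card T = k" "u \<in> T" "\<forall>t\<in>T. xi v t = 0"
    by (rule orthogonal_set_containing_perp_to[OF dg k u v])
  have "w \<notin> span T"
  proof
    assume "w \<in> span T"
    moreover have "orth_proj {u} w \<in> span T"
      using orth_proj_in_span span_mono[of "{u}" T] T(4) by blast
    ultimately have "v \<in> span T"
      unfolding v_def by (rule span_diff)
    then have "xi v v = 0"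
      using xi_span_eq_0[of "{v}" T] T(5) span_base by blast
    then show False
      using v xi_self_eq_0_iff by blast
  qed
  then show ?thesis
    using that T(1-4) by blast
qed

lemma span_eq_if_orthogonal_set_card_eq:
  assumes T: "finite T" "orthogonal_set T" "T \<subseteq> span B" and B: "independent B" "finite B"
    and card: "card T = card B"
  shows "span T = span B"
proof -
  have "b \<in> span T" if b: "b \<in> B" for b
  proof (rule ccontr)
    assume nb: "b \<notin> span T"
    then have "independent (insert b T)"
      using independent_insertI orthogonal_set_independent T(2) by blast
    moreover have "insert b T \<subseteq> span B"
      using T(3) b span_base by blast
    ultimately have "card (insert b T) \<le> card B"
      using independent_span_bound[OF B(2)] by blast
    moreover have "b \<notin> T"
      using nb span_base by blast
    ultimately show False
      using card T(1) by simp
  qed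
  then show ?thesis
    using T(3) span_eq by blast
qed

end

section \<open>Flats\<close>

abbreviation translate :: "'v::ab_group_add \<Rightarrow> 'v set \<Rightarrow> 'v set" where
  "translate p S \<equiv> (\<lambda>w. p + w) ` S"

definition direction :: "'v::ab_group_add set \<Rightarrow> 'v set" where
  "direction X = {b - a |a b. a \<in> X \<and> b \<in> X}"

lemma perp_iff_direction:
  "perp xi X Y \<longleftrightarrow> X \<noteq> {} \<and> Y \<noteq> {} \<and> (\<forall>u\<in>direction X. \<forall>w\<in>direction Y. xi u w = 0)"
  unfolding perp_def direction_def by blast

lemma line_perp_iff_direction:
  "line_perp xi L1 L2 \<longleftrightarrow> (\<forall>u\<in>direction L1. \<forall>w\<in>direction L2. xi u w = 0)"
  unfolding line_perp_def direction_def by blast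

lemma diff_in_direction: "a \<in> X \<Longrightarrow> b \<in> X \<Longrightarrow> b - a \<in> direction X"
  unfolding direction_def by blast

lemma direction_mono: "X \<subseteq> Y \<Longrightarrow> direction X \<subseteq> direction Y"
  unfolding direction_def by blast

lemma translate_iff [simp]: "z \<in> translate p S \<longleftrightarrow> z - p \<in> S"
proof
  assume "z \<in> translate p S"
  then show "z - p \<in> S"
    by auto
next
  assume "z - p \<in> S"
  moreover have "z = p + (z - p)"
    by (simp add: algebra_simps)
  ultimately show "z \<in> translate p S"
    by blast
qed

lemma translate_Int: "translate q S1 \<inter> translate q S2 = translate q (S1 \<inter> S2)"
  by auto

lemma translate_inject: "translate q S1 = translate q S2 \<Longrightarrow> S1 = S2"
  by (metis add_diff_cancel_left' translate_iff set_eqI)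

context anisotropic_form
begin

lemma translate_self: "subspace S \<Longrightarrow> p \<in> translate p S"
  using subspace_0 by simp

lemma affsub_translate: "subspace S \<Longrightarrow> affsub scale (translate p S)"
  unfolding affsub_def by blast

lemma translate_rebase:
  assumes S: "subspace S" and q: "q \<in> translate p S"
  shows "translate p S = translate q S"
proof (rule set_eqI)
  fix z
  have qp: "q - p \<in> S"
    using q by simp
  have "z - q = (z - p) - (q - p)" "z - p = (z - q) + (q - p)"
    by (simp_all add: algebra_simps)
  then have "z - p \<in> S \<longleftrightarrow> z - q \<in> S"
    using subspace_diff[OF S _ qp] subspace_add[OF S _ qp] by metis
  then show "z \<in> translate p S \<longleftrightarrow> z \<in> translate q S"
    by simp
qed

lemma affsub_translate_at:
  assumes "affsub scale X" "q \<in> X"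
  obtains S where "subspace S" "X = translate q S"
  using assms translate_rebase unfolding affsub_def by metis

lemma direction_translate:
  assumes S: "subspace S"
  shows "direction (translate p S) = S"
proof (rule set_eqI)
  fix u
  show "u \<in> direction (translate p S) \<longleftrightarrow> u \<in> S"
  proof
    assume "u \<in> direction (translate p S)"
    then obtain a b where ab: "a - p \<in> S" "b - p \<in> S" "u = b - a"
      unfolding direction_def by auto
    have "u = (b - p) - (a - p)"
      using ab(3) by simp
    then show "u \<in> S"
      using subspace_diff[OF S ab(2,1)] by simp
  next
    assume "u \<in> S"
    then show "u \<in> direction (translate p S)"
      using diff_in_direction[of p _ "p + u"] translate_self[OF S] by simp
  qed
qed

lemma affsub_add_direction:
  assumes "affsub scale X" "x \<in> X" "w \<in> direction X"
  shows "x + w \<in> X"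
proof -
  obtain S where S: "subspace S" "X = translate x S"
    using affsub_translate_at[OF assms(1,2)] .
  then show ?thesis
    using assms(3) direction_translate by simp
qed

lemma join_translate:
  assumes S1: "subspace S1" and S2: "subspace S2"
  shows "join scale (translate q S1) (translate q S2) = translate q (span (S1 \<union> S2))"
proof -
  let ?Y = "translate q (span (S1 \<union> S2))"
  have "translate q S1 \<union> translate q S2 \<subseteq> ?Y"
    using span_base by auto
  then have "join scale (translate q S1) (translate q S2) \<subseteq> ?Y"
    unfolding join_def using affsub_translate[OF subspace_span] by blast
  moreover have "?Y \<subseteq> Z"
    if Z: "affsub scale Z" "translate q S1 \<union> translate q S2 \<subseteq> Z" for Z
  proof -
    have "translate q S1 \<subseteq> Z"
      using Z(2) by simp
    then have "q \<in> Z"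
      using translate_self[OF S1] by (rule subsetD)
    then obtain W where W: "subspace W" "Z = translate q W"
      using affsub_translate_at[OF Z(1)] by blast
    have "S1 \<union> S2 \<subseteq> W"
    proof
      fix u assume "u \<in> S1 \<union> S2"
      then have "q + u \<in> translate q S1 \<union> translate q S2"
        by simp
      then have "q + u \<in> Z"
        using Z(2) by blast
      then show "u \<in> W"
        using W(2) by simp
    qed
    then have "span (S1 \<union> S2) \<subseteq> W"
      using span_minimal W(1) by blast
    then have "?Y \<subseteq> translate q W"
      by (rule image_mono)
    then show ?thesis
      using W(2) by (simp only:)
  qed
  then have "?Y \<subseteq> join scale (translate q S1) (translate q S2)"
    unfolding join_def by (intro Inter_greatest) blast
  ultimately show ?thesis
    by (rule antisym)
qed

lemma span_Un_span: "span (span A \<union> span C) = span (A \<union> C)"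
proof
  show "span (A \<union> C) \<subseteq> span (span A \<union> span C)"
    by (intro span_mono) (auto intro: span_base)
  have "span A \<union> span C \<subseteq> span (A \<union> C)"
    using span_mono by blast
  then show "span (span A \<union> span C) \<subseteq> span (A \<union> C)"
    using span_minimal by blast
qed

lemma Hk_affsub: "X \<in> Hk scale k \<Longrightarrow> affsub scale X"
  unfolding Hk_def affsub_def by blast

lemma translate_span_in_Hk:
  assumes "finite T" "orthogonal_set T"
  shows "translate p (span T) \<in> Hk scale (card T)"
  unfolding Hk_def lin_dim_eq_def
  using assms orthogonal_set_independent by blast

lemma Hk_orthogonal_basis_extending:
  assumes X: "X \<in> Hk scale k" "x \<in> X"
    and S0: "S0 \<subseteq> direction X" "finite S0" "orthogonal_set S0" "card S0 \<le> k"
  obtains T where "S0 \<subseteq> T" "finite T" "orthogonal_set T" "card T = k" "X = translate x (span T)"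
proof -
  obtain p W B where W: "subspace W" "X = translate p W"
    and B: "finite B" "card B = k" "independent B" "span B = W"
    using X(1) unfolding Hk_def lin_dim_eq_def by blast
  have "S0 \<subseteq> span B"
    using S0(1) W B(4) direction_translate by simp
  then obtain T where T: "S0 \<subseteq> T" "T \<subseteq> span B" "finite T" "orthogonal_set T" "card T = k"
    using orthogonal_set_extend[OF subspace_span _ S0(2,3) span_superset B(3,1), where n = k]
      S0(4) B(2) by auto
  have "span T = W"
    using span_eq_if_orthogonal_set_card_eq[OF T(3,4,2) B(3,1)] T(5) B(2,4) by simp
  then have "X = translate x (span T)"
    using translate_rebase[OF W(1)] W(2) X(2) by blast
  then show ?thesis
    using that T by blast
qed

lemma Hk_orthogonal_basis:
  assumes "X \<in> Hk scale k" "x \<in> X"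
  obtains T where "finite T" "orthogonal_set T" "card T = k" "X = translate x (span T)"
proof (rule Hk_orthogonal_basis_extending[OF assms, of "{}"])
  show "orthogonal_set {}"
    unfolding orthogonal_set_def by simp
qed (use that in auto)


lemma Hk1_eq_translate_span_diff:
  assumes L: "L \<in> Hk scale 1" "a \<in> L" "b \<in> L" "a \<noteq> b"
  shows "L = translate a (span {b - a})"
proof -
  obtain T where T: "finite T" "orthogonal_set T" "card T = 1" "L = translate a (span T)"
    by (rule Hk_orthogonal_basis[OF L(1,2)])
  then obtain e where e: "T = {e}"
    using card_1_singletonE by blast
  have "b - a \<in> span {e}"
    using L(3) T(4) e by simp
  then obtain t where t: "b - a = scale t e"
    unfolding span_singleton by blast
  then have "t \<noteq> 0"
    using L(4) by auto
  then have "e = scale (inverse t) (b - a)"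
    using t by simp
  then have "span {e} = span {b - a}"
    using t span_scale span_base span_eq by (metis insert_subset empty_subsetI singletonI)
  then show ?thesis
    using T(4) e by simp
qed

end

section \<open>Flats in perpendicular position\<close>

context anisotropic_form
begin

lemma perp_circ_directions:
  assumes X: "affsub scale X1" "affsub scale X2" and pc: "perp_circ scale xi X1 X2"
  obtains U1 U2 where "subspace (direction (X1 \<inter> X2))"
    "direction X1 = span (direction (X1 \<inter> X2) \<union> U1)"
    "direction X2 = span (direction (X1 \<inter> X2) \<union> U2)"
    "\<forall>u\<in>U2. \<forall>w\<in>direction (X1 \<inter> X2). xi u w = 0" "\<forall>u\<in>U1. \<forall>w\<in>U2. xi u w = 0"
proof -
  obtain q Z1 Z2 where q: "q \<in> X1 \<inter> X2" and Z: "affsub scale Z1" "affsub scale Z2" "q \<in> Z1" "q \<in> Z2"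
    and p2: "perp_x xi Z2 (X1 \<inter> X2)" and p12: "perp_x xi Z1 Z2"
    and j1: "join scale (X1 \<inter> X2) Z1 = X1" and j2: "join scale (X1 \<inter> X2) Z2 = X2"
    using pc unfolding perp_circ_def by blast
  obtain S1 where S1: "subspace S1" "X1 = translate q S1"
    using affsub_translate_at[OF X(1)] q by blast
  obtain S2 where S2: "subspace S2" "X2 = translate q S2"
    using affsub_translate_at[OF X(2)] q by blast
  obtain U1 where U1: "subspace U1" "Z1 = translate q U1"
    using affsub_translate_at[OF Z(1,3)] by blast
  obtain U2 where U2: "subspace U2" "Z2 = translate q U2"
    using affsub_translate_at[OF Z(2,4)] by blast
  have W: "subspace (S1 \<inter> S2)"
    using subspace_inter S1(1) S2(1) by blast
  have M: "X1 \<inter> X2 = translate q (S1 \<inter> S2)"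
    using S1 S2 translate_Int by simp
  have dM: "direction (X1 \<inter> X2) = S1 \<inter> S2"
    using M direction_translate[OF W] by simp
  have "translate q (span ((S1 \<inter> S2) \<union> U1)) = translate q S1"
    using j1 join_translate[OF W U1(1)] M U1(2) S1(2) by simp
  then have "direction X1 = span (direction (X1 \<inter> X2) \<union> U1)"
    using translate_inject S1 direction_translate dM by metis
  moreover have "translate q (span ((S1 \<inter> S2) \<union> U2)) = translate q S2"
    using j2 join_translate[OF W U2(1)] M U2(2) S2(2) by simp
  then have "direction X2 = span (direction (X1 \<inter> X2) \<union> U2)"
    using translate_inject S2 direction_translate dM by metis
  moreover have "\<forall>u\<in>U2. \<forall>w\<in>direction (X1 \<inter> X2). xi u w = 0"
    using p2 U2 direction_translate[OF U2(1)] unfolding perp_x_def perp_iff_direction by metis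
  moreover have "\<forall>u\<in>U1. \<forall>w\<in>U2. xi u w = 0"
    using p12 U1 U2 direction_translate[OF U1(1)] direction_translate[OF U2(1)]
    unfolding perp_x_def perp_iff_direction by metis
  ultimately show ?thesis
    using that W dM by metis
qed

lemma perp_circ_decompose:
  assumes X: "affsub scale X1" "affsub scale X2" and pc: "perp_circ scale xi X1 X2"
    and x: "x \<in> X1" "x \<in> X2" and y: "y \<in> X2"
  obtains w p where "y - x = w + p" "w \<in> direction (X1 \<inter> X2)" "\<forall>d\<in>direction X1. xi p d = 0"
proof -
  obtain U1 U2 where W: "subspace (direction (X1 \<inter> X2))"
    and d1: "direction X1 = span (direction (X1 \<inter> X2) \<union> U1)"
    and d2: "direction X2 = span (direction (X1 \<inter> X2) \<union> U2)"
    and o2W: "\<forall>u\<in>U2. \<forall>w\<in>direction (X1 \<inter> X2). xi u w = 0"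
    and o12: "\<forall>u\<in>U1. \<forall>w\<in>U2. xi u w = 0"
    using perp_circ_directions[OF X pc] by blast
  have "y - x \<in> span (direction (X1 \<inter> X2) \<union> U2)"
    using diff_in_direction[OF x(2) y] d2 by simp
  then obtain w p where wp: "y - x = w + p" "w \<in> span (direction (X1 \<inter> X2))" "p \<in> span U2"
    unfolding span_Un by blast
  have "\<forall>a\<in>U2. \<forall>b\<in>direction (X1 \<inter> X2) \<union> U1. xi a b = 0"
    using o2W o12 xi_sym by fastforce
  then have "\<forall>d\<in>direction X1. xi p d = 0"
    using xi_span_eq_0 wp(3) d1 by blast
  moreover have "w \<in> direction (X1 \<inter> X2)"
    using wp(2) span_eq_iff[THEN iffD2, OF W] by simp
  ultimately show ?thesis
    using that wp(1) by blast
qed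

lemma translate_span_Int_orthogonal_set:
  assumes "finite T" "orthogonal_set T" "P \<subseteq> T" "Q \<subseteq> T"
  shows "translate x (span P) \<inter> translate x (span Q) = translate x (span (P \<inter> Q))"
  by (simp only: translate_Int span_Int_orthogonal_set[OF assms])

lemma perp_x_translate_span:
  assumes "orthogonal_set T" "P \<subseteq> T" "Q \<subseteq> T" "P \<inter> Q = {}"
  shows "perp_x xi (translate x (span P)) (translate x (span Q))"
proof -
  have x: "x \<in> translate x (span P)" "x \<in> translate x (span Q)"
    by (simp_all add: span_zero)
  have "\<forall>u\<in>span P. \<forall>w\<in>span Q. xi u w = 0"
    using orthogonal_set_disjoint_spans[OF assms] by blast
  then show ?thesis
    unfolding perp_x_def perp_iff_direction direction_translate[OF subspace_span] using x by blast
qed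

lemma translate_span_neq_orthogonal_set:
  assumes T: "orthogonal_set T" "A \<subseteq> T" and E: "E \<subseteq> T" "A \<inter> E = {}" "E \<noteq> {}"
  shows "translate x (span A) \<noteq> translate x (span (A \<union> E))"
proof -
  obtain e where e: "e \<in> E"
    using E(3) by blast
  then have "e \<in> T" "e \<notin> A"
    using E(1,2) by blast+
  then have "e \<notin> span A"
    using orthogonal_set_not_in_span[OF T] by blast
  moreover have "e \<in> span (A \<union> E)"
    using e span_base[of e "A \<union> E"] by blast
  ultimately show ?thesis
    using translate_inject[of x "span A" "span (A \<union> E)"] by blast
qed

lemma perp_star_orthogonal_split:
  assumes T: "finite T" "orthogonal_set T" and sub: "A \<subseteq> T" "C \<subseteq> T" "D \<subseteq> T"
    and disj: "A \<inter> C = {}" "A \<inter> D = {}" "C \<inter> D = {}" and ne: "C \<noteq> {}" "D \<noteq> {}"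
  shows "perp_star scale xi (translate x (span (A \<union> C))) (translate x (span (A \<union> D)))"
proof -
  let ?X1 = "translate x (span (A \<union> C))" and ?X2 = "translate x (span (A \<union> D))"
  have "(A \<union> C) \<inter> (A \<union> D) = A"
    using disj(3) by blast
  moreover have "A \<union> C \<subseteq> T" "A \<union> D \<subseteq> T"
    using sub by blast+
  ultimately have M: "?X1 \<inter> ?X2 = translate x (span A)"
    using translate_span_Int_orthogonal_set[OF T] by metis
  have join: "join scale (translate x (span A)) (translate x (span E)) = translate x (span (A \<union> E))" for E
    by (simp only: join_translate[OF subspace_span subspace_span] span_Un_span)
  have "perp_circ scale xi ?X1 ?X2"
    unfolding perp_circ_def
  proof (rule exI[of _ x], rule exI[of _ "translate x (span C)"], rule exI[of _ "translate x (span D)"],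
      intro conjI)
    show "x \<in> ?X1 \<inter> ?X2" "x \<in> translate x (span C)" "x \<in> translate x (span D)"
      by (simp_all add: span_zero)
    show "affsub scale (translate x (span C))" "affsub scale (translate x (span D))"
      by (rule affsub_translate[OF subspace_span])+
    show "perp_x xi (translate x (span C)) (?X1 \<inter> ?X2)"
      unfolding M using perp_x_translate_span[OF T(2) sub(2,1)] disj(1) by (simp add: Int_commute)
    show "perp_x xi (translate x (span D)) (?X1 \<inter> ?X2)"
      unfolding M using perp_x_translate_span[OF T(2) sub(3,1)] disj(2) by (simp add: Int_commute)
    show "perp_x xi (translate x (span C)) (translate x (span D))"
      using perp_x_translate_span[OF T(2) sub(2,3) disj(3)] .
    show "join scale (?X1 \<inter> ?X2) (translate x (span C)) = ?X1"
      "join scale (?X1 \<inter> ?X2) (translate x (span D)) = ?X2"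
      unfolding M join by (rule refl)+
  qed
  moreover have "?X1 \<inter> ?X2 \<noteq> ?X1" "?X1 \<inter> ?X2 \<noteq> ?X2"
    unfolding M using translate_span_neq_orthogonal_set[OF T(2) sub(1)] sub(2,3) disj(1,2) ne
    by simp_all
  ultimately show ?thesis
    unfolding perp_star_def by blast
qed

lemma orthogonal_set_extend_through:
  assumes dg: "dim_ge scale n" and B: "finite B" "orthogonal_set B" "card B < n"
    and p: "\<forall>t\<in>B. xi p t = 0"
  obtains D where "D \<inter> B = {}" "finite D" "card D = n - card B" "orthogonal_set (B \<union> D)"
    "p \<in> span D"
proof -
  obtain T0 where T0: "B \<subseteq> T0" "finite T0" "orthogonal_set T0" "card T0 \<le> n" "p \<in> span (T0 - B)"
  proof (cases "p = 0")
    case True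
    then show ?thesis
      by (intro that[of B]) (use B span_zero in auto)
  next
    case False
    then have "orthogonal_set (insert p B)" "p \<notin> B"
      using orthogonal_set_insert[OF B(2) _ p] by auto
    moreover have "insert p B - B = {p}"
      using \<open>p \<notin> B\<close> by blast
    ultimately show ?thesis
      by (intro that[of "insert p B"]) (use B(1,3) span_base[of p "{p}"] in auto)
  qed
  obtain T where T: "T0 \<subseteq> T" "finite T" "orthogonal_set T" "card T = n"
    using orthogonal_set_extend_UNIV[OF dg T0(2,3,4)] by blast
  have BT: "B \<subseteq> T"
    using T0(1) T(1) by blast
  have "card (T - B) = n - card B"
    using card_Diff_subset[OF B(1) BT] T(4) by simp
  moreover have "B \<union> (T - B) = T"
    using BT by blast
  moreover have "p \<in> span (T - B)"
    using T0(5) span_mono[of "T0 - B" "T - B"] T(1) by blast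
  ultimately show ?thesis
    by (intro that[of "T - B"]) (use T(2,3) in auto)
qed

lemma orthogonal_frame_through:
  assumes m: "m < k1" "m < k2" and dg: "dim_ge scale (k1 + k2 - m)"
    and X1: "X1 \<in> Hk scale k1" "x \<in> X1" and z: "z \<in> X1" "z \<noteq> x"
    and y: "\<forall>d\<in>direction X1. xi (y - x) d = 0"
  obtains B A D where "finite B" "orthogonal_set B" "z - x \<in> B" "X1 = translate x (span B)"
    "A \<subseteq> B - {z - x}" "card A = m" "finite A"
    "D \<inter> B = {}" "finite D" "card D = k2 - m" "orthogonal_set (B \<union> D)" "y - x \<in> span D"
proof -
  have s: "{z - x} \<subseteq> direction X1" "finite {z - x}" "orthogonal_set {z - x}" "card {z - x} \<le> k1"
    using diff_in_direction[OF X1(2) z(1)] orthogonal_set_singleton z(2) m(1) by simp_all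
  obtain B where B: "finite B" "orthogonal_set B" "card B = k1" "z - x \<in> B"
    "X1 = translate x (span B)"
  proof (rule Hk_orthogonal_basis_extending[OF X1 s])
    fix T assume "{z - x} \<subseteq> T" "finite T" "orthogonal_set T" "card T = k1" "X1 = translate x (span T)"
    then show thesis
      using that[of T] by simp
  qed
  have "m \<le> card (B - {z - x})"
    using B(1,3,4) m(1) by simp
  then obtain A where A: "A \<subseteq> B - {z - x}" "card A = m" "finite A"
    by (rule obtain_subset_with_card_n)
  have yB: "\<forall>t\<in>B. xi (y - x) t = 0"
    using y B(5) direction_translate[OF subspace_span] span_base by simp
  have n: "card B < k1 + k2 - m" "k1 + k2 - m - card B = k2 - m"
    using B(3) m by auto
  obtain D where D: "D \<inter> B = {}" "finite D" "card D = k2 - m" "orthogonal_set (B \<union> D)"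
    "y - x \<in> span D"
    using orthogonal_set_extend_through[OF dg B(1,2) n(1) yB] unfolding n(2) by blast
  show ?thesis
    by (rule that[OF B(1,2,4,5) A D])
qed

lemma perp_star_through:
  assumes m: "m < k1" "m < k2" and dg: "dim_ge scale (k1 + k2 - m)"
    and X1: "X1 \<in> Hk scale k1" "x \<in> X1" and z: "z \<in> X1" "z \<noteq> x"
    and y: "\<forall>d\<in>direction X1. xi (y - x) d = 0"
  obtains X2 where "X2 \<in> Hk scale k2" "perp_star scale xi X1 X2" "X1 \<inter> X2 \<in> Hk scale m"
    "x \<in> X2" "y \<in> X2" "z \<notin> X2"
proof -
  obtain B A D where B: "finite B" "orthogonal_set B" "z - x \<in> B" "X1 = translate x (span B)"
    and A: "A \<subseteq> B - {z - x}" "card A = m" "finite A"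
    and D: "D \<inter> B = {}" "finite D" "card D = k2 - m" "orthogonal_set (B \<union> D)" "y - x \<in> span D"
    by (rule orthogonal_frame_through[OF m dg X1 z y])
  define X2 where "X2 = translate x (span (A \<union> D))"
  have sub: "A \<subseteq> B \<union> D" "A \<union> D \<subseteq> B \<union> D" "A \<union> (B - A) \<subseteq> B \<union> D"
    using A(1) by blast+
  have fin: "finite (B \<union> D)"
    using B(1) D(2) by blast
  have X1': "X1 = translate x (span (A \<union> (B - A)))"
  proof -
    have "A \<union> (B - A) = B"
      using A(1) by blast
    then show ?thesis
      using B(4) by simp
  qed
  have "perp_star scale xi X1 X2"
    unfolding X1' X2_def
    by (rule perp_star_orthogonal_split[OF _ D(4)]) (use B(1,3) A(1) D(1,2,3) m(2) in auto)
  moreover have "X1 \<inter> X2 \<in> Hk scale m"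
  proof -
    have "(A \<union> (B - A)) \<inter> (A \<union> D) = A"
      using A(1) D(1) by blast
    then have "X1 \<inter> X2 = translate x (span A)"
      unfolding X1' X2_def using translate_span_Int_orthogonal_set[OF fin D(4) sub(3,2)] by simp
    then show ?thesis
      using translate_span_in_Hk[OF A(3) orthogonal_set_subset[OF D(4) sub(1)], of x] A(2) by simp
  qed
  moreover have "X2 \<in> Hk scale k2"
  proof -
    have "card (A \<union> D) = k2"
      using card_Un_disjoint[OF A(3) D(2)] A(1,2) D(1,3) m(2) by auto
    then show ?thesis
      unfolding X2_def using translate_span_in_Hk[OF _ orthogonal_set_subset[OF D(4) sub(2)]] A(3) D(2)
      by fastforce
  qed
  moreover have "x \<in> X2" "y \<in> X2"
    unfolding X2_def using D(5) span_mono[of D "A \<union> D"] by (auto simp: span_zero)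
  moreover have "z \<notin> X2"
    unfolding X2_def
    using orthogonal_set_not_in_span[OF D(4) sub(2), of "z - x"] A(1) B(3) D(1) by auto
  ultimately show ?thesis
    using that by blast
qed

end

section \<open>Definability\<close>

text \<open>\<open>normal_at R H\<^sub>2 X\<^sub>1 x y\<close> is the relation expressed by the formula
  \<open>normal_formula\<close> below; for \<open>x \<in> X\<^sub>1\<close> it says that \<open>y - x\<close> is orthogonal to \<open>X\<^sub>1\<close>.\<close>

definition normal_at :: "('p set \<Rightarrow> 'p set \<Rightarrow> bool) \<Rightarrow> 'p set set \<Rightarrow> 'p set \<Rightarrow> 'p \<Rightarrow> 'p \<Rightarrow> bool" where
  "normal_at R H2 X1 x y \<longleftrightarrow> (\<forall>z. z \<in> X1 \<and> z \<noteq> x \<longrightarrow>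
     (\<exists>X2\<in>H2. R X1 X2 \<and> (\<exists>w. w \<in> X1 \<and> w \<notin> X2) \<and> (\<exists>w. w \<in> X2 \<and> w \<notin> X1) \<and>
        x \<in> X2 \<and> y \<in> X2 \<and> z \<notin> X2))"

context anisotropic_form
begin

text \<open>Let \<open>s\<close> be the orthogonal projection of \<open>y - x\<close> onto the direction of \<open>X\<^sub>1\<close>.
  If \<open>s \<noteq> 0\<close>, the witness \<open>X\<^sub>2\<close> for \<open>z = x + s\<close> would contain \<open>z\<close> by
  \<open>perp_circ_decompose\<close>.\<close>

lemma orthogonal_if_normal_at:
  assumes R: "\<And>X2. R X1 X2 \<Longrightarrow> perp_circ scale xi X1 X2"
    and X1: "X1 \<in> Hk scale k1" "x \<in> X1" and N: "normal_at R (Hk scale k2) X1 x y"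
  shows "\<forall>d\<in>direction X1. xi (y - x) d = 0"
proof -
  obtain B where B: "finite B" "orthogonal_set B" "card B = k1" "X1 = translate x (span B)"
    by (rule Hk_orthogonal_basis[OF X1])
  have dX1: "direction X1 = span B"
    using B(4) direction_translate[OF subspace_span] by simp
  define s where "s = orth_proj B (y - x)"
  have sB: "s \<in> span B"
    unfolding s_def by (rule orth_proj_in_span)
  have r: "xi ((y - x) - s) d = 0" if "d \<in> span B" for d
    unfolding s_def using orth_proj_residual_orthogonal_span[OF B(1,2) that] .
  have "s = 0"
  proof (rule ccontr)
    assume "s \<noteq> 0"
    then have z: "x + s \<in> X1" "x + s \<noteq> x"
      using B(4) sB by auto
    then obtain X2 where X2: "X2 \<in> Hk scale k2" "R X1 X2" "x \<in> X2" "y \<in> X2" "x + s \<notin> X2"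
      using N unfolding normal_at_def by blast
    obtain w p where wp: "y - x = w + p" "w \<in> direction (X1 \<inter> X2)"
      "\<forall>d\<in>direction X1. xi p d = 0"
      using perp_circ_decompose[OF Hk_affsub[OF X1(1)] Hk_affsub[OF X2(1)] R[OF X2(2)] X1(2) X2(3,4)] .
    have "w \<in> span B"
      using wp(2) direction_mono[of "X1 \<inter> X2" X1] dX1 by blast
    then have swB: "s - w \<in> span B"
      using sB span_diff by blast
    have "s - w = p - ((y - x) - s)"
      using wp(1) by (simp add: algebra_simps)
    then have "xi (s - w) (s - w) = xi p (s - w) - xi ((y - x) - s) (s - w)"
      by (metis xi_diff_left)
    also have "\<dots> = 0"
      using wp(3) dX1 swB r by simp
    finally have "s = w"
      using xi_self_eq_0_iff by simp
    moreover have "w \<in> direction X2"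
      using wp(2) direction_mono[of "X1 \<inter> X2" X2] by blast
    ultimately have "x + s \<in> X2"
      using affsub_add_direction[OF Hk_affsub[OF X2(1)] X2(3)] by simp
    then show False
      using X2(5) by contradiction
  qed
  then show ?thesis
    using r dX1 by simp
qed

lemma normal_at_if_orthogonal:
  assumes R: "\<And>X2. X2 \<in> Hk scale k2 \<Longrightarrow> perp_star scale xi X1 X2 \<Longrightarrow> X1 \<inter> X2 \<in> Hk scale m \<Longrightarrow> R X1 X2"
    and m: "m < k1" "m < k2" and dg: "dim_ge scale (k1 + k2 - m)"
    and X1: "X1 \<in> Hk scale k1" "x \<in> X1" and y: "\<forall>d\<in>direction X1. xi (y - x) d = 0"
  shows "normal_at R (Hk scale k2) X1 x y"
  unfolding normal_at_def
proof (intro allI impI)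
  fix z assume "z \<in> X1 \<and> z \<noteq> x"
  then have z: "z \<in> X1" "z \<noteq> x"
    by blast+
  obtain X2 where X2: "X2 \<in> Hk scale k2" "perp_star scale xi X1 X2" "X1 \<inter> X2 \<in> Hk scale m"
    "x \<in> X2" "y \<in> X2" "z \<notin> X2"
    by (rule perp_star_through[OF m dg X1 z y])
  moreover have "\<exists>w. w \<in> X1 \<and> w \<notin> X2" "\<exists>w. w \<in> X2 \<and> w \<notin> X1"
    using X2(2) unfolding perp_star_def by blast+
  ultimately show "\<exists>X2\<in>Hk scale k2. R X1 X2 \<and> (\<exists>w. w \<in> X1 \<and> w \<notin> X2) \<and>
      (\<exists>w. w \<in> X2 \<and> w \<notin> X1) \<and> x \<in> X2 \<and> y \<in> X2 \<and> z \<notin> X2"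
    using R by blast
qed

lemma in_all_Hk_through_iff_collinear:
  assumes dg: "dim_ge scale (k + 1)" and k: "1 \<le> k" and ab: "a \<noteq> b"
  shows "(\<forall>X\<in>Hk scale k. a \<in> X \<longrightarrow> b \<in> X \<longrightarrow> c \<in> X) \<longleftrightarrow>
    (\<exists>L\<in>Hk scale 1. a \<in> L \<and> b \<in> L \<and> c \<in> L)"
proof
  let ?L = "translate a (span {b - a})"
  assume all: "\<forall>X\<in>Hk scale k. a \<in> X \<longrightarrow> b \<in> X \<longrightarrow> c \<in> X"
  have u: "b - a \<noteq> 0"
    using ab by simp
  have "c - a \<in> span {b - a}"
  proof (rule ccontr)
    assume "c - a \<notin> span {b - a}"
    then obtain T where T: "finite T" "orthogonal_set T" "card T = k" "b - a \<in> T" "c - a \<notin> span T"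
      by (rule orthogonal_set_containing_avoiding[OF dg k u])
    have "translate a (span T) \<in> Hk scale k"
      using translate_span_in_Hk[OF T(1,2)] T(3) by simp
    moreover have "a \<in> translate a (span T)" "b \<in> translate a (span T)"
      using T(4) span_base span_zero by auto
    ultimately show False
      using all T(5) by auto
  qed
  then have "c \<in> ?L"
    by simp
  moreover have "?L \<in> Hk scale 1" "a \<in> ?L" "b \<in> ?L"
    using translate_span_in_Hk[OF _ orthogonal_set_singleton[OF u]] span_base span_zero by auto
  ultimately show "\<exists>L\<in>Hk scale 1. a \<in> L \<and> b \<in> L \<and> c \<in> L"
    by blast
next
  assume "\<exists>L\<in>Hk scale 1. a \<in> L \<and> b \<in> L \<and> c \<in> L"
  then obtain L where L: "L \<in> Hk scale 1" "a \<in> L" "b \<in> L" "c \<in> L"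
    by blast
  have cL: "c - a \<in> span {b - a}"
    using L(4) Hk1_eq_translate_span_diff[OF L(1-3) ab] by simp
  show "\<forall>X\<in>Hk scale k. a \<in> X \<longrightarrow> b \<in> X \<longrightarrow> c \<in> X"
  proof (intro ballI impI)
    fix X assume X: "X \<in> Hk scale k" "a \<in> X" "b \<in> X"
    obtain S where S: "subspace S" "X = translate a S"
      using affsub_translate_at[OF Hk_affsub[OF X(1)] X(2)] .
    then have "span {b - a} \<subseteq> S"
      using X(3) span_minimal[of "{b - a}" S] by simp
    then show "c \<in> X"
      using cL S(2) by auto
  qed
qed

lemma lines_perp_iff:
  assumes ab: "a \<noteq> b" and cd: "c \<noteq> d"
  shows "(\<exists>L1\<in>Hk scale 1. \<exists>L2\<in>Hk scale 1. a \<in> L1 \<and> b \<in> L1 \<and> c \<in> L2 \<and> d \<in> L2 \<and> line_perp xi L1 L2)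
    \<longleftrightarrow> xi (b - a) (d - c) = 0"
proof
  assume "\<exists>L1\<in>Hk scale 1. \<exists>L2\<in>Hk scale 1. a \<in> L1 \<and> b \<in> L1 \<and> c \<in> L2 \<and> d \<in> L2 \<and> line_perp xi L1 L2"
  then obtain L1 L2 where L: "a \<in> L1" "b \<in> L1" "c \<in> L2" "d \<in> L2" "line_perp xi L1 L2"
    by blast
  then show "xi (b - a) (d - c) = 0"
    using diff_in_direction[OF L(1,2)] diff_in_direction[OF L(3,4)]
    unfolding line_perp_iff_direction by blast
next
  assume perp: "xi (b - a) (d - c) = 0"
  let ?L1 = "translate a (span {b - a})" and ?L2 = "translate c (span {d - c})"
  have "b - a \<noteq> 0" "d - c \<noteq> 0"
    using ab cd by auto
  then have "?L1 \<in> Hk scale 1" "?L2 \<in> Hk scale 1"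
    using translate_span_in_Hk[OF _ orthogonal_set_singleton] by fastforce+
  moreover have "a \<in> ?L1" "b \<in> ?L1" "c \<in> ?L2" "d \<in> ?L2"
    using span_base span_zero by auto
  moreover have "line_perp xi ?L1 ?L2"
    unfolding line_perp_iff_direction direction_translate[OF subspace_span]
    using xi_span_eq_0[of "{b - a}" "{d - c}"] perp by blast
  ultimately show "\<exists>L1\<in>Hk scale 1. \<exists>L2\<in>Hk scale 1.
      a \<in> L1 \<and> b \<in> L1 \<and> c \<in> L2 \<and> d \<in> L2 \<and> line_perp xi L1 L2"
    by blast
qed

lemma Hk_with_common_normal_foot:
  assumes dg: "dim_ge scale (k + 1)" and k: "1 \<le> k" and ab: "a \<noteq> b" and cd: "c \<noteq> d"
    and perp: "xi (b - a) (d - c) = 0"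
  obtains X x where "X \<in> Hk scale k" "a \<in> X" "b \<in> X" "x \<in> X"
    "\<forall>t\<in>direction X. xi (c - x) t = 0" "\<forall>t\<in>direction X. xi (d - x) t = 0"
proof -
  have "b - a \<noteq> 0" "d - c \<noteq> 0"
    using ab cd by auto
  then obtain T where T: "finite T" "orthogonal_set T" "card T = k" "b - a \<in> T"
    "\<forall>t\<in>T. xi (d - c) t = 0"
    using orthogonal_set_containing_perp_to[OF dg k _ _ perp] by blast
  let ?X = "translate a (span T)"
  define x where "x = a + orth_proj T (c - a)"
  have X: "?X \<in> Hk scale k" "a \<in> ?X" "b \<in> ?X" "x \<in> ?X"
    using translate_span_in_Hk[OF T(1,2), of a] T(3,4) span_base span_zero orth_proj_in_span
    unfolding x_def by auto
  have c: "xi (c - x) t = 0" if "t \<in> span T" for t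
    using orth_proj_residual_orthogonal_span[OF T(1,2) that, of "c - a"] unfolding x_def
    by (simp add: algebra_simps)
  have "xi (d - x) t = 0" if "t \<in> span T" for t
  proof -
    have "xi (d - c) t = 0"
      using xi_span_eq_0[of "{d - c}" T] T(5) that span_base by blast
    moreover have "(d - c) + (c - x) = d - x"
      by (simp add: algebra_simps)
    ultimately show ?thesis
      using c[OF that] xi_add_left[of "d - c" "c - x" t] by simp
  qed
  then show ?thesis
    using that[OF X] c direction_translate[OF subspace_span] by simp
qed

lemma perp_lines_iff_normal_at:
  assumes sound: "\<And>X1 X2. X1 \<in> Hk scale k1 \<Longrightarrow> R X1 X2 \<Longrightarrow> perp_circ scale xi X1 X2"
    and complete: "\<And>X1 X2. X1 \<in> Hk scale k1 \<Longrightarrow> X2 \<in> Hk scale k2 \<Longrightarrow> perp_star scale xi X1 X2 \<Longrightarrow>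
      X1 \<inter> X2 \<in> Hk scale m \<Longrightarrow> R X1 X2"
    and m: "m < k1" "m < k2" and dg: "dim_ge scale (k1 + k2 - m)" and k1: "1 \<le> k1"
    and ab: "a \<noteq> b" and cd: "c \<noteq> d"
  shows "(\<exists>X\<in>Hk scale k1. a \<in> X \<and> b \<in> X \<and>
      (\<exists>x. x \<in> X \<and> normal_at R (Hk scale k2) X x c \<and> normal_at R (Hk scale k2) X x d))
    \<longleftrightarrow> (\<exists>L1\<in>Hk scale 1. \<exists>L2\<in>Hk scale 1.
      a \<in> L1 \<and> b \<in> L1 \<and> c \<in> L2 \<and> d \<in> L2 \<and> line_perp xi L1 L2)"
proof -
  have normal_iff: "normal_at R (Hk scale k2) X x y \<longleftrightarrow> (\<forall>d\<in>direction X. xi (y - x) d = 0)"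
    if "X \<in> Hk scale k1" "x \<in> X" for X x y
    using orthogonal_if_normal_at[where R = R, OF sound[OF that(1)] that]
      normal_at_if_orthogonal[where R = R and m = m, OF complete[OF that(1)] m dg that] by blast
  show ?thesis
    unfolding lines_perp_iff[OF ab cd]
  proof
    assume "\<exists>X\<in>Hk scale k1. a \<in> X \<and> b \<in> X \<and>
      (\<exists>x. x \<in> X \<and> normal_at R (Hk scale k2) X x c \<and> normal_at R (Hk scale k2) X x d)"
    then obtain X x where X: "X \<in> Hk scale k1" "a \<in> X" "b \<in> X" "x \<in> X"
      "normal_at R (Hk scale k2) X x c" "normal_at R (Hk scale k2) X x d"
      by blast
    then have "xi (c - x) (b - a) = 0" "xi (d - x) (b - a) = 0"
      using normal_iff[OF X(1,4)] diff_in_direction[OF X(2,3)] by blast+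
    then have "xi ((d - x) - (c - x)) (b - a) = 0"
      by (simp add: xi_diff_left)
    then show "xi (b - a) (d - c) = 0"
      by (simp add: xi_sym[of "b - a"])
  next
    assume "xi (b - a) (d - c) = 0"
    moreover have "dim_ge scale (k1 + 1)"
      using dim_ge_mono[OF dg] m by simp
    ultimately obtain X x where X: "X \<in> Hk scale k1" "a \<in> X" "b \<in> X" "x \<in> X"
      "\<forall>t\<in>direction X. xi (c - x) t = 0" "\<forall>t\<in>direction X. xi (d - x) t = 0"
      using Hk_with_common_normal_foot[OF _ k1 ab cd] by blast
    then show "\<exists>X\<in>Hk scale k1. a \<in> X \<and> b \<in> X \<and>
      (\<exists>x. x \<in> X \<and> normal_at R (Hk scale k2) X x c \<and> normal_at R (Hk scale k2) X x d)"
      using normal_iff[OF X(1,4)] by blast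
  qed
qed

end

definition fo_imp :: "fo \<Rightarrow> fo \<Rightarrow> fo" where
  "fo_imp \<phi> \<psi> = Neg (Conj \<phi> (Neg \<psi>))"

definition fo_all_point :: "nat \<Rightarrow> fo \<Rightarrow> fo" where
  "fo_all_point x \<phi> = Neg (ExP x (Neg \<phi>))"

definition fo_all1 :: "nat \<Rightarrow> fo \<Rightarrow> fo" where
  "fo_all1 x \<phi> = Neg (Ex1 x (Neg \<phi>))"

text \<open>Variable conventions: the block variable 0 of the first sort is \<open>X\<^sub>1\<close> and that
  of the second sort is \<open>X\<^sub>2\<close>; point variable 4 is the foot \<open>x\<close>, 5 the point \<open>z\<close>
  and 6 the auxiliary point \<open>w\<close> of \<open>normal_at\<close>.\<close>

definition normal_formula :: "nat \<Rightarrow> fo" where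
  "normal_formula i = fo_all_point 5 (fo_imp (Conj (In1 5 0) (Neg (EqP 5 4)))
     (Ex2 0 (Conj (Rel 0 0) (Conj (ExP 6 (Conj (In1 6 0) (Neg (In2 6 0))))
        (Conj (ExP 6 (Conj (In2 6 0) (Neg (In1 6 0))))
          (Conj (In2 4 0) (Conj (In2 i 0) (Neg (In2 5 0)))))))))"

definition collinear_formula :: fo where
  "collinear_formula = Conj (Neg (EqP 0 1)) (fo_all1 0 (fo_imp (Conj (In1 0 0) (In1 1 0)) (In1 2 0)))"

definition perp_lines_formula :: fo where
  "perp_lines_formula = Conj (Neg (EqP 0 1)) (Conj (Neg (EqP 2 3))
     (Ex1 0 (Conj (In1 0 0) (Conj (In1 1 0)
       (ExP 4 (Conj (In1 4 0) (Conj (normal_formula 2) (normal_formula 3))))))))"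

lemma sat_normal_formula:
  assumes "i \<noteq> 5" "i \<noteq> 6"
  shows "sat UNIV H1 H2 R e0 e1 e2 (normal_formula i) \<longleftrightarrow> normal_at R H2 (e1 0) (e0 4) (e0 i)"
  unfolding normal_formula_def fo_all_point_def fo_imp_def normal_at_def using assms by (simp; blast)

lemma sat_collinear_formula:
  "sat UNIV H1 H2 R e0 e1 e2 collinear_formula \<longleftrightarrow>
    e0 0 \<noteq> e0 1 \<and> (\<forall>X\<in>H1. e0 0 \<in> X \<longrightarrow> e0 1 \<in> X \<longrightarrow> e0 2 \<in> X)"
  unfolding collinear_formula_def fo_all1_def fo_imp_def by auto

lemma sat_perp_lines_formula:
  "sat UNIV H1 H2 R e0 e1 e2 perp_lines_formula \<longleftrightarrow> e0 0 \<noteq> e0 1 \<and> e0 2 \<noteq> e0 3 \<and>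
     (\<exists>X\<in>H1. e0 0 \<in> X \<and> e0 1 \<in> X \<and>
       (\<exists>x. x \<in> X \<and> normal_at R H2 X x (e0 2) \<and> normal_at R H2 X x (e0 3)))"
  unfolding perp_lines_formula_def by (simp add: sat_normal_formula)

context anisotropic_form
begin

lemma fo_definable_lines_if_between:
  assumes sound: "\<And>X1 X2. X1 \<in> Hk scale k1 \<Longrightarrow> R X1 X2 \<Longrightarrow> perp_circ scale xi X1 X2"
    and complete: "\<And>X1 X2. X1 \<in> Hk scale k1 \<Longrightarrow> X2 \<in> Hk scale k2 \<Longrightarrow> perp_star scale xi X1 X2 \<Longrightarrow>
      X1 \<inter> X2 \<in> Hk scale m \<Longrightarrow> R X1 X2"
    and m: "m < k1" "m < k2" and dg: "dim_ge scale (k1 + k2 - m)" and k1: "1 \<le> k1"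
  shows "fo_definable_in UNIV (Hk scale 1) (line_perp xi) (Hk scale k1) (Hk scale k2) R"
  unfolding fo_definable_in_def
proof (intro exI conjI allI impI)
  fix e0 :: "nat \<Rightarrow> 'v" and e1 e2
  have "dim_ge scale (k1 + 1)"
    using dim_ge_mono[OF dg] m by simp
  then show "sat UNIV (Hk scale k1) (Hk scale k2) R e0 e1 e2 collinear_formula \<longleftrightarrow>
      e0 0 \<noteq> e0 1 \<and> (\<exists>L\<in>Hk scale 1. e0 0 \<in> L \<and> e0 1 \<in> L \<and> e0 2 \<in> L)"
  proof (cases "e0 0 = e0 1")
    case False
    then show ?thesis
      unfolding sat_collinear_formula
      using in_all_Hk_through_iff_collinear[OF \<open>dim_ge scale (k1 + 1)\<close> k1 False] by simp
  qed (simp add: sat_collinear_formula)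
next
  fix e0 :: "nat \<Rightarrow> 'v" and e1 e2
  show "sat UNIV (Hk scale k1) (Hk scale k2) R e0 e1 e2 perp_lines_formula \<longleftrightarrow>
      e0 0 \<noteq> e0 1 \<and> e0 2 \<noteq> e0 3 \<and>
      (\<exists>L1\<in>Hk scale 1. \<exists>L2\<in>Hk scale 1. e0 0 \<in> L1 \<and> e0 1 \<in> L1 \<and> e0 2 \<in> L2 \<and> e0 3 \<in> L2 \<and>
        line_perp xi L1 L2)"
  proof (cases "e0 0 \<noteq> e0 1 \<and> e0 2 \<noteq> e0 3")
    case True
    then show ?thesis
      unfolding sat_perp_lines_formula
      using perp_lines_iff_normal_at[OF sound complete m dg k1 conjunct1[OF True] conjunct2[OF True]]
      by simp
  qed (auto simp: sat_perp_lines_formula)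
qed

end

theorem theorem2p4:
  fixes scale :: "'f::field \<Rightarrow> 'v::ab_group_add \<Rightarrow> 'v"
    and xi :: "'v \<Rightarrow> 'v \<Rightarrow> 'f"
    and k1 k2 :: nat
  assumes "anisotropic_space scale xi"
    and "1 \<le> k1" and "1 \<le> k2"
  shows "(\<forall>m::nat. m < k1 \<and> m < k2 \<and> dim_ge scale (k1 + k2 - m) \<longrightarrow>
            fo_definable_in UNIV (Hk scale 1) (line_perp xi)
              (Hk scale k1) (Hk scale k2) (perp_m scale xi m k1 k2))
       \<and> (dim_ge scale (k1 + 1) \<and> dim_ge scale (k2 + 1) \<longrightarrow>
            fo_definable_in UNIV (Hk scale 1) (line_perp xi)
              (Hk scale k1) (Hk scale k2)
              (\<lambda>X1 X2. perp_circ scale xi X1 X2 \<and> X1 \<in> Hk scale k1 \<and> X2 \<in> Hk scale k2))"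
proof -
  interpret anisotropic_form scale xi
    by (rule anisotropic_form.intro) (rule assms(1))
  have "fo_definable_in UNIV (Hk scale 1) (line_perp xi) (Hk scale k1) (Hk scale k2)
      (perp_m scale xi m k1 k2)"
    if m: "m < k1" "m < k2" "dim_ge scale (k1 + k2 - m)" for m
    by (rule fo_definable_lines_if_between[where m = m])
      (use m assms(2) in \<open>auto simp: perp_m_def perp_star_def\<close>)
  moreover have "fo_definable_in UNIV (Hk scale 1) (line_perp xi) (Hk scale k1) (Hk scale k2)
      (\<lambda>X1 X2. perp_circ scale xi X1 X2 \<and> X1 \<in> Hk scale k1 \<and> X2 \<in> Hk scale k2)"
    if dg: "dim_ge scale (k1 + 1)" "dim_ge scale (k2 + 1)"
  proof -
    \<comment> \<open>take \<open>m = min k1 k2 - 1\<close>, so that \<open>k1 + k2 - m = max k1 k2 + 1\<close>\<close>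
    have dgm: "dim_ge scale (k1 + k2 - (min k1 k2 - 1))"
      using dg assms(2,3) by (cases "k1 \<le> k2") (auto simp: min_def)
    show ?thesis
      by (rule fo_definable_lines_if_between[where m = "min k1 k2 - 1"])
        (use dgm assms(2,3) in \<open>auto simp: perp_star_def\<close>)
  qed
  ultimately show ?thesis
    by blast
qed

end
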